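(* Let $\mathcal{F}$ be a finite set of complex-valued (algebraic) functions on Boolean variables, and consider the counting problem $\#\neq_2\,|\,\mathcal{F}$, whose inputs are bipartite tensor networks in which every vertex on one side carries the binary disequality function $\neq_2$ (i.e. the matrix $\begin{pmatrix}0&1\\1&0\end{pmatrix}$) and every vertex on the other side carries a function from $\mathcal{F}$, and which asks for the value of the network. Assume that every arity-2 gadget realizable in this problem has the form $\lambda\,(\neq_2)$ for some constant $\lambda$ (possibly $0$), and that every arity-4 gadget realizable in this problem has the form $\lambda\,(\neq_2)\otimes(\neq_2)$ for some constant $\lambda$ (possibly $0$). Then for every positive integer $n$, the value of $\#\neq_2\,|\,\mathcal{F}$ is either zero on all input tensor networks with $n$ vertices (from $\mathcal{F}$), or nonzero on all input tensor networks with $n$ vertices.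
   Context: A tensor network's value is the sum over all Boolean assignments to its edges of the product of its vertex function values. The proof uses a "one step" transformation: given a network $G$ containing two edges $\neq_2(x,y)$ and $\neq_2(z,w)$, replace them by $\neq_2(x,z)$ and $\neq_2(y,w)$ to get $G'$; cutting the two edges yields an arity-4 gadget of the form $\lambda\,(\neq_2)\otimes(\neq_2)$, so the values of $G$ and $G'$ are each $2\lambda$ or $4\lambda$, hence both zero or both nonzero (with ratio $1$, $2$ or $1/2$). Such steps connect all networks with $n$ vertices. *)

theory Defs
  imports Complex_Main "HOL-Library.FuncSet"
begin

text \<open>A signature (constraint function) is a pair (arity k, function on Boolean
  lists); the function is only meaningful on lists of length k.\<close>
type_synonym sig = "nat \<times> (bool list \<Rightarrow> complex)"

definition neq2 :: "bool \<Rightarrow> bool \<Rightarrow> complex" where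
  "neq2 a b = (if a \<noteq> b then 1 else 0)"

text \<open>Ports (edge slots) of a list of F-side vertices: port (i,j) is the j-th
  input of vertex i.\<close>
definition ports :: "sig list \<Rightarrow> (nat \<times> nat) set" where
  "ports vs = {(i, j). i < length vs \<and> j < fst (vs ! i)}"

text \<open>A wiring of a bipartite network/gadget for #(neq2 | F): the ports listed
  in ds are dangling edges (in this order); all other ports are paired up by
  the fixed-point-free involution m, each pair joined through one neq2 vertex.\<close>
definition valid_wiring :: "sig list \<Rightarrow> (nat \<times> nat \<Rightarrow> nat \<times> nat) \<Rightarrow> (nat \<times> nat) list \<Rightarrow> bool" where
  "valid_wiring vs m ds \<longleftrightarrow> distinct ds \<and> set ds \<subseteq> ports vs \<and>
     (\<forall>p \<in> ports vs - set ds. m p \<in> ports vs - set ds \<and> m p \<noteq> p \<and> m (m p) = p)"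

definition gadget_sig :: "sig list \<Rightarrow> (nat \<times> nat \<Rightarrow> nat \<times> nat) \<Rightarrow> (nat \<times> nat) list \<Rightarrow> bool list \<Rightarrow> complex" where
  "gadget_sig vs m ds xs =
     (\<Sum>\<sigma> \<in> PiE (ports vs) (\<lambda>_. UNIV :: bool set).
        (if (\<forall>k < length ds. \<sigma> (ds ! k) = xs ! k)
         then (\<Prod>p \<in> ports vs - set ds. neq2 (\<sigma> p) (\<sigma> (m p))) *
              (\<Prod>i < length vs. snd (vs ! i) (map (\<lambda>j. \<sigma> (i, j)) [0..<fst (vs ! i)]))
         else 0))"

definition network_value :: "sig list \<Rightarrow> (nat \<times> nat \<Rightarrow> nat \<times> nat) \<Rightarrow> complex" where
  "network_value vs m = gadget_sig vs m [] []"

definition realizable :: "sig set \<Rightarrow> nat \<Rightarrow> (bool list \<Rightarrow> complex) set" where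
  "realizable F k = {gadget_sig vs m ds | vs m ds.
      set vs \<subseteq> F \<and> valid_wiring vs m ds \<and> length ds = k}"

end

theory Submission
  imports Defs
begin

text \<open>Valid wirings of a fixed list of vertices are the perfect matchings of its ports, and any
  two perfect matchings are connected by moves replacing two matched pairs {x, y}, {z, w} by
  {x, z}, {y, w}. Cutting the two disequality vertices involved in a move leaves an arity-4 gadget
  \<open>\<lambda> (\<noteq>\<^sub>2) \<otimes> (\<noteq>\<^sub>2)\<close>; closing it up either way yields 2\<lambda> or 4\<lambda>, so a move never changes whether the
  value vanishes.\<close>

definition perfect_matching :: "'a set \<Rightarrow> ('a \<Rightarrow> 'a) \<Rightarrow> bool" where
  "perfect_matching P m \<longleftrightarrow> (\<forall>p \<in> P. m p \<in> P \<and> m p \<noteq> p \<and> m (m p) = p)"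

definition swap_pairs :: "('a \<Rightarrow> 'a) \<Rightarrow> 'a \<Rightarrow> 'a \<Rightarrow> 'a \<Rightarrow> 'a" where
  "swap_pairs m x z = m(x := z, z := x, m x := m z, m z := m x)"

lemma perfect_matching_distinct:
  assumes "perfect_matching P m" "x \<in> P" "z \<in> P" "x \<noteq> z" "m x \<noteq> z"
  shows "distinct [x, m x, z, m z]"
  using assms unfolding perfect_matching_def by (metis distinct_length_2_or_more distinct_singleton)

lemma perfect_matching_outside:
  assumes "perfect_matching P m" "q \<in> P" "q \<notin> {x, m x, z, m z}" "x \<in> P" "z \<in> P"
  shows "m q \<notin> {x, m x, z, m z}"
  using assms unfolding perfect_matching_def by (metis insertCI insertE singletonD empty_iff)

lemma swap_pairs_simps:
  assumes "distinct [x, y, z, w]" "m x = y" "m z = w"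
  shows "swap_pairs m x z x = z" "swap_pairs m x z z = x"
    "swap_pairs m x z y = w" "swap_pairs m x z w = y"
    "q \<notin> {x, y, z, w} \<Longrightarrow> swap_pairs m x z q = m q"
  using assms by (auto simp: swap_pairs_def)

lemma perfect_matching_swap_pairs:
  assumes pm: "perfect_matching P m" and "x \<in> P" "z \<in> P" "x \<noteq> z" "m x \<noteq> z"
  shows "perfect_matching P (swap_pairs m x z)"
proof -
  have d: "distinct [x, m x, z, m z]" using perfect_matching_distinct assms .
  note s = swap_pairs_simps[OF d refl refl]
  show ?thesis
    unfolding perfect_matching_def
  proof
    fix q assume q: "q \<in> P"
    show "swap_pairs m x z q \<in> P \<and> swap_pairs m x z q \<noteq> q \<and> swap_pairs m x z (swap_pairs m x z q) = q"
    proof (cases "q \<in> {x, m x, z, m z}")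
      case True
      then show ?thesis using d s(1-4) assms pm unfolding perfect_matching_def by auto
    next
      case False
      then show ?thesis using s(5) perfect_matching_outside[OF pm q False] assms pm q
        unfolding perfect_matching_def by auto
    qed
  qed
qed

lemma perfect_matching_swap_connected:
  assumes "finite P" "perfect_matching P m1" "perfect_matching P m2"
    and cong: "\<And>m m'. (\<And>p. p \<in> P \<Longrightarrow> m p = m' p) \<Longrightarrow> Q m \<longleftrightarrow> Q m'"
    and swap: "\<And>m x z. perfect_matching P m \<Longrightarrow> x \<in> P \<Longrightarrow> z \<in> P \<Longrightarrow> x \<noteq> z \<Longrightarrow> m x \<noteq> z \<Longrightarrow>
                 Q (swap_pairs m x z) \<longleftrightarrow> Q m"
  shows "Q m1 \<longleftrightarrow> Q m2"
  using assms(2)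
proof (induction "card {p \<in> P. m1 p \<noteq> m2 p}" arbitrary: m1 rule: less_induct)
  case less
  show ?case
  proof (cases "\<forall>p \<in> P. m1 p = m2 p")
    case True
    then show ?thesis using cong by blast
  next
    case False
    then obtain p where p: "p \<in> P" "m1 p \<noteq> m2 p" by blast
    define z where "z = m2 p"
    have pm1: "\<forall>q \<in> P. m1 q \<in> P \<and> m1 q \<noteq> q \<and> m1 (m1 q) = q"
      and pm2: "\<forall>q \<in> P. m2 q \<in> P \<and> m2 q \<noteq> q \<and> m2 (m2 q) = q"
      using less.prems assms(3) unfolding perfect_matching_def by blast+
    have z: "z \<in> P" "p \<noteq> z" "m1 p \<noteq> z" "m2 z = p"
      using p pm2 unfolding z_def by auto
    define m1' where "m1' = swap_pairs m1 p z"
    have d: "distinct [p, m1 p, z, m1 z]"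
      using perfect_matching_distinct[OF less.prems p(1) z(1-3)] .
    note s = swap_pairs_simps[OF d refl refl, folded m1'_def]
    \<comment> \<open>The swap repairs the pair at p; the partners m1 p and m1 z it breaks were already wrong.\<close>
    have "{q \<in> P. m1' q \<noteq> m2 q} \<subseteq> {q \<in> P. m1 q \<noteq> m2 q} - {p}"
    proof
      fix q assume q: "q \<in> {q \<in> P. m1' q \<noteq> m2 q}"
      have "q \<noteq> p" "q \<noteq> z" using q s(1,2) z(4) unfolding z_def by auto
      moreover have "m1 q \<noteq> m2 q"
      proof (cases "q \<in> {m1 p, m1 z}")
        case True
        then consider "q = m1 p" | "q = m1 z" by blast
        then show ?thesis
        proof cases
          case 1
          then show ?thesis using pm1 pm2 p by metis
        next
          case 2
          then show ?thesis using pm1 pm2 p z by metis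
        qed
      next
        case False
        then show ?thesis using q s(5) \<open>q \<noteq> p\<close> \<open>q \<noteq> z\<close> by auto
      qed
      ultimately show "q \<in> {q \<in> P. m1 q \<noteq> m2 q} - {p}" using q by auto
    qed
    then have "card {q \<in> P. m1' q \<noteq> m2 q} < card {q \<in> P. m1 q \<noteq> m2 q}"
      using p \<open>finite P\<close> by (intro psubset_card_mono) auto
    moreover have "perfect_matching P m1'"
      unfolding m1'_def using perfect_matching_swap_pairs less.prems p(1) z(1-3) .
    ultimately have "Q m1' \<longleftrightarrow> Q m2" by (rule less.hyps)
    then show ?thesis using swap[OF less.prems p(1) z(1-3)] unfolding m1'_def by blast
  qed
qed

definition vertex_product :: "sig list \<Rightarrow> (nat \<times> nat \<Rightarrow> bool) \<Rightarrow> complex" where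
  "vertex_product vs \<sigma> = (\<Prod>i < length vs. snd (vs ! i) (map (\<lambda>j. \<sigma> (i, j)) [0..<fst (vs ! i)]))"

definition close_with_neq2 :: "(bool list \<Rightarrow> complex) \<Rightarrow> complex" where
  "close_with_neq2 g = (\<Sum>a\<in>UNIV. \<Sum>b\<in>UNIV. \<Sum>c\<in>UNIV. \<Sum>d\<in>UNIV. g [a, b, c, d] * neq2 a b * neq2 c d)"

definition neq2_pairing_multiple :: "(bool list \<Rightarrow> complex) \<Rightarrow> bool" where
  "neq2_pairing_multiple g \<longleftrightarrow> (\<exists>lam. \<exists>a b c d :: nat. {a, b, c, d} = {0, 1, 2, 3} \<and>
     (\<forall>xs. length xs = 4 \<longrightarrow> g xs = lam * neq2 (xs ! a) (xs ! b) * neq2 (xs ! c) (xs ! d)))"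

lemma close_with_neq2_pairing:
  fixes lam :: complex
  assumes "{i, j, k, l} = {0, 1, 2, 3 :: nat}"
  shows "close_with_neq2 (\<lambda>xs. lam * neq2 (xs ! i) (xs ! j) * neq2 (xs ! k) (xs ! l)) \<in> {2 * lam, 4 * lam}"
proof -
  have "distinct [i, j, k, l]"
    using assms by (intro card_distinct) simp
  moreover have "i \<in> {0, 1, 2, 3}" "j \<in> {0, 1, 2, 3}" "k \<in> {0, 1, 2, 3}" "l \<in> {0, 1, 2, 3}"
    using assms by blast+
  ultimately show ?thesis
    unfolding close_with_neq2_def
    by (simp only: insert_iff empty_iff) (elim disjE; simp add: UNIV_bool neq2_def)
qed

lemma close_with_neq2_eq_0_iff:
  assumes "neq2_pairing_multiple g"
  shows "close_with_neq2 g = 0 \<longleftrightarrow> (\<forall>a b c d. g [a, b, c, d] = 0)"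
proof
  obtain lam i j k l where ijkl: "{i, j, k, l} = {0, 1, 2, 3 :: nat}"
    and g: "\<And>xs. length xs = 4 \<Longrightarrow> g xs = lam * neq2 (xs ! i) (xs ! j) * neq2 (xs ! k) (xs ! l)"
    using assms unfolding neq2_pairing_multiple_def by blast
  have "close_with_neq2 g = close_with_neq2 (\<lambda>xs. lam * neq2 (xs ! i) (xs ! j) * neq2 (xs ! k) (xs ! l))"
    unfolding close_with_neq2_def by (simp add: g)
  moreover assume "close_with_neq2 g = 0"
  ultimately have "lam = 0"
    using close_with_neq2_pairing[OF ijkl, of lam] by auto
  then show "\<forall>a b c d. g [a, b, c, d] = 0" by (simp add: g)
qed (simp add: close_with_neq2_def)

lemma finite_ports: "finite (ports vs)"
proof -
  have "ports vs = Sigma {..<length vs} (\<lambda>i. {..<fst (vs ! i)})" by (auto simp: ports_def)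
  then show ?thesis by simp
qed

lemma valid_wiring_Nil_iff: "valid_wiring vs m [] \<longleftrightarrow> perfect_matching (ports vs) m"
  by (simp add: valid_wiring_def perfect_matching_def)

lemma network_value_eq_sum:
  "network_value vs m = (\<Sum>\<sigma> \<in> PiE (ports vs) (\<lambda>_. UNIV).
     (\<Prod>p \<in> ports vs. neq2 (\<sigma> p) (\<sigma> (m p))) * vertex_product vs \<sigma>)"
  by (simp add: network_value_def gadget_sig_def vertex_product_def)

lemma network_value_cong:
  "(\<And>p. p \<in> ports vs \<Longrightarrow> m p = m' p) \<Longrightarrow> network_value vs m = network_value vs m'"
  unfolding network_value_eq_sum by (intro sum.cong prod.cong refl arg_cong2[where f = "(*)"]) auto

lemma gadget_sig_four:
  "gadget_sig vs m [x, y, z, w] [a, b, c, d] = (\<Sum>\<sigma> \<in> PiE (ports vs) (\<lambda>_. UNIV).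
     (if \<sigma> x = a \<and> \<sigma> y = b \<and> \<sigma> z = c \<and> \<sigma> w = d
      then (\<Prod>p \<in> ports vs - {x, y, z, w}. neq2 (\<sigma> p) (\<sigma> (m p))) * vertex_product vs \<sigma> else 0))"
proof -
  have "(\<forall>k < length [x, y, z, w]. \<sigma> ([x, y, z, w] ! k) = [a, b, c, d] ! k) \<longleftrightarrow>
      \<sigma> x = a \<and> \<sigma> y = b \<and> \<sigma> z = c \<and> \<sigma> w = d" for \<sigma> :: "nat \<times> nat \<Rightarrow> bool"
    by (auto simp: less_Suc_eq numeral_eq_Suc)
  moreover have "set [x, y, z, w] = {x, y, z, w}" by simp
  ultimately show ?thesis unfolding gadget_sig_def vertex_product_def by (simp only:)
qed

lemma valid_wiring_cut:
  assumes pm: "perfect_matching (ports vs) m" and "x \<in> ports vs" "z \<in> ports vs"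
    and d: "distinct [x, m x, z, m z]"
  shows "valid_wiring vs m [x, m x, z, m z]"
proof -
  have "m p \<in> ports vs - set [x, m x, z, m z] \<and> m p \<noteq> p \<and> m (m p) = p"
    if "p \<in> ports vs - set [x, m x, z, m z]" for p
    using that perfect_matching_outside[OF pm, of p x z] pm assms(2,3)
    unfolding perfect_matching_def by auto
  then show ?thesis
    using d pm assms(2,3) unfolding valid_wiring_def perfect_matching_def by auto
qed

lemma network_value_cut:
  assumes pm: "perfect_matching (ports vs) m" and "x \<in> ports vs" "z \<in> ports vs"
    and d: "distinct [x, m x, z, m z]"
  shows "network_value vs m = close_with_neq2 (gadget_sig vs m [x, m x, z, m z])"
proof -
  let ?P = "ports vs" and ?S = "{x, m x, z, m z}"
  let ?rest = "\<lambda>\<sigma>. (\<Prod>p \<in> ?P - ?S. neq2 (\<sigma> p) (\<sigma> (m p))) * vertex_product vs \<sigma>"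
  let ?cut = "\<lambda>a b c d. neq2 a b * neq2 c d"
  have S: "?S \<subseteq> ?P" "m (m x) = x" "m (m z) = z"
    using pm assms(2,3) unfolding perfect_matching_def by auto
  \<comment> \<open>Each disequality vertex is seen from both of its ports; neq2, symmetric and 0/1-valued,
    absorbs the resulting square.\<close>
  have "(\<Prod>p \<in> ?S. neq2 (\<sigma> p) (\<sigma> (m p))) = ?cut (\<sigma> x) (\<sigma> (m x)) (\<sigma> z) (\<sigma> (m z))" for \<sigma>
    using d S(2,3) by (simp add: neq2_def)
  then have split: "(\<Prod>p \<in> ?P. neq2 (\<sigma> p) (\<sigma> (m p))) * vertex_product vs \<sigma> =
      ?rest \<sigma> * ?cut (\<sigma> x) (\<sigma> (m x)) (\<sigma> z) (\<sigma> (m z))" for \<sigma>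
    using prod.subset_diff[OF S(1) finite_ports, where g = "\<lambda>p. neq2 (\<sigma> p) (\<sigma> (m p))"]
    by (simp add: mult_ac)
  have point: "(\<Sum>a\<in>UNIV. \<Sum>b\<in>UNIV. \<Sum>c\<in>UNIV. \<Sum>d\<in>UNIV.
      (if \<sigma> x = a \<and> \<sigma> (m x) = b \<and> \<sigma> z = c \<and> \<sigma> (m z) = d then ?rest \<sigma> else 0) * ?cut a b c d)
      = ?rest \<sigma> * ?cut (\<sigma> x) (\<sigma> (m x)) (\<sigma> z) (\<sigma> (m z))" for \<sigma> :: "nat \<times> nat \<Rightarrow> bool"
    by (cases "\<sigma> x"; cases "\<sigma> (m x)"; cases "\<sigma> z"; cases "\<sigma> (m z)") (simp_all add: UNIV_bool)
  have "network_value vs m =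
      (\<Sum>\<sigma> \<in> PiE ?P (\<lambda>_. UNIV). ?rest \<sigma> * ?cut (\<sigma> x) (\<sigma> (m x)) (\<sigma> z) (\<sigma> (m z)))"
    unfolding network_value_eq_sum split ..
  also have "\<dots> = (\<Sum>\<sigma> \<in> PiE ?P (\<lambda>_. UNIV). \<Sum>a\<in>UNIV. \<Sum>b\<in>UNIV. \<Sum>c\<in>UNIV. \<Sum>d\<in>UNIV.
      (if \<sigma> x = a \<and> \<sigma> (m x) = b \<and> \<sigma> z = c \<and> \<sigma> (m z) = d then ?rest \<sigma> else 0) * ?cut a b c d)"
    unfolding point ..
  also have "\<dots> = (\<Sum>a\<in>UNIV. \<Sum>b\<in>UNIV. \<Sum>c\<in>UNIV. \<Sum>d\<in>UNIV. \<Sum>\<sigma> \<in> PiE ?P (\<lambda>_. UNIV).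
      (if \<sigma> x = a \<and> \<sigma> (m x) = b \<and> \<sigma> z = c \<and> \<sigma> (m z) = d then ?rest \<sigma> else 0) * ?cut a b c d)"
    by (simp only: sum.swap[of _ "PiE ?P (\<lambda>_. UNIV)"])
  also have "\<dots> = close_with_neq2 (gadget_sig vs m [x, m x, z, m z])"
    unfolding close_with_neq2_def gadget_sig_four by (simp add: sum_distrib_right mult.assoc)
  finally show ?thesis .
qed

lemma gadget_sig_swap_pairs:
  assumes "distinct [x, m x, z, m z]"
  shows "gadget_sig vs (swap_pairs m x z) [x, z, m x, m z] [a, b, c, d] =
    gadget_sig vs m [x, m x, z, m z] [a, c, b, d]"
proof -
  have "{x, z, m x, m z} = {x, m x, z, m z}" by auto
  moreover have "swap_pairs m x z p = m p" if "p \<notin> {x, m x, z, m z}" for p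
    using swap_pairs_simps(5)[OF assms refl refl that] .
  ultimately show ?thesis
    unfolding gadget_sig_four by (intro sum.cong refl) (auto intro!: prod.cong arg_cong2[where f = "(*)"])
qed

lemma network_value_eq_0_iff_gadget_vanishes:
  assumes F4: "\<forall>g \<in> realizable F 4. neq2_pairing_multiple g" and "set vs \<subseteq> F"
    and pm: "perfect_matching (ports vs) m" and xz: "x \<in> ports vs" "z \<in> ports vs"
    and d: "distinct [x, m x, z, m z]"
  shows "network_value vs m = 0 \<longleftrightarrow> (\<forall>a b c d. gadget_sig vs m [x, m x, z, m z] [a, b, c, d] = 0)"
proof -
  have "gadget_sig vs m [x, m x, z, m z] \<in> realizable F 4"
    using valid_wiring_cut[OF pm xz d] \<open>set vs \<subseteq> F\<close> unfolding realizable_def by force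
  then show ?thesis
    using F4 close_with_neq2_eq_0_iff network_value_cut[OF pm xz d] by simp
qed

lemma network_value_swap_pairs_eq_0_iff:
  assumes F4: "\<forall>g \<in> realizable F 4. neq2_pairing_multiple g" and F: "set vs \<subseteq> F"
    and pm: "perfect_matching (ports vs) m" and xz: "x \<in> ports vs" "z \<in> ports vs" "x \<noteq> z" "m x \<noteq> z"
  shows "network_value vs (swap_pairs m x z) = 0 \<longleftrightarrow> network_value vs m = 0"
proof -
  let ?m' = "swap_pairs m x z"
  have d: "distinct [x, m x, z, m z]" using perfect_matching_distinct[OF pm xz] .
  note s = swap_pairs_simps[OF d refl refl]
  have pm': "perfect_matching (ports vs) ?m'" using perfect_matching_swap_pairs[OF pm xz] .
  have mx: "m x \<in> ports vs" using pm xz unfolding perfect_matching_def by blast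
  have d': "distinct [x, ?m' x, m x, ?m' (m x)]" using d s by auto
  have "network_value vs ?m' = 0 \<longleftrightarrow> (\<forall>a b c d. gadget_sig vs ?m' [x, z, m x, m z] [a, b, c, d] = 0)"
    using network_value_eq_0_iff_gadget_vanishes[OF F4 F pm' xz(1) mx d'] s by simp
  also have "\<dots> \<longleftrightarrow> (\<forall>a b c d. gadget_sig vs m [x, m x, z, m z] [a, c, b, d] = 0)"
    by (simp only: gadget_sig_swap_pairs[OF d])
  also have "\<dots> \<longleftrightarrow> (\<forall>a b c d. gadget_sig vs m [x, m x, z, m z] [a, b, c, d] = 0)"
    by blast
  also have "\<dots> \<longleftrightarrow> network_value vs m = 0"
    using network_value_eq_0_iff_gadget_vanishes[OF F4 F pm xz(1,2) d] by simp
  finally show ?thesis .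
qed

theorem mainTheorem16:
  fixes F :: "sig set"
  assumes "finite F"
    and ar2: "\<forall>g \<in> realizable F 2. \<exists>lam. \<forall>x y. g [x, y] = lam * neq2 x y"
    and ar4: "\<forall>g \<in> realizable F 4. \<exists>lam. \<exists>a b c d :: nat. {a, b, c, d} = {0, 1, 2, 3} \<and>
               (\<forall>xs. length xs = 4 \<longrightarrow> g xs = lam * neq2 (xs ! a) (xs ! b) * neq2 (xs ! c) (xs ! d))"
  shows "\<forall>n > 0. \<forall>vs. length vs = n \<and> set vs \<subseteq> F \<longrightarrow>
           (\<forall>m. valid_wiring vs m [] \<longrightarrow> network_value vs m = 0) \<or>
           (\<forall>m. valid_wiring vs m [] \<longrightarrow> network_value vs m \<noteq> 0)"
proof (intro allI impI)
  fix n vs assume "length vs = n \<and> set vs \<subseteq> F"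
  then have F: "set vs \<subseteq> F" by blast
  have F4: "\<forall>g \<in> realizable F 4. neq2_pairing_multiple g"
    using ar4 unfolding neq2_pairing_multiple_def .
  have "network_value vs m1 = 0 \<longleftrightarrow> network_value vs m2 = 0"
    if "valid_wiring vs m1 []" "valid_wiring vs m2 []" for m1 m2
  proof (rule perfect_matching_swap_connected[where Q = "\<lambda>m. network_value vs m = 0"])
    show "network_value vs m = 0 \<longleftrightarrow> network_value vs m' = 0"
      if "\<And>p. p \<in> ports vs \<Longrightarrow> m p = m' p" for m m'
      using network_value_cong[OF that] by simp
  qed (use that finite_ports network_value_swap_pairs_eq_0_iff[OF F4 F] in \<open>simp_all add: valid_wiring_Nil_iff\<close>)
  then show "(\<forall>m. valid_wiring vs m [] \<longrightarrow> network_value vs m = 0) \<or>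
      (\<forall>m. valid_wiring vs m [] \<longrightarrow> network_value vs m \<noteq> 0)"
    by blast
qed

end
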